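(* Let $E$ be a locally finite directed graph with no sources, $c(v) = |s^{-1}(v)|$ for $v\in E^0$, and $M_L$ the Hilbert bimodule of the Exel system $(C_0(E^\infty),\alpha,L)$. For $\mu\in E^*$ with $|\mu|\ge1$ we have, in $\mathcal{L}(M_L)$, $$\phi(\chi_{Z(\mu)}) = c(s(\mu_1))\,\Theta_{q(\chi_{Z(\mu)}),\,q(\chi_{Z(\mu_1)})} = c(s(\mu_1))\,\Theta_{q(\chi_{Z(\mu_1)}),\,q(\chi_{Z(\mu)})}.$$
   Context: A directed graph $E = (E^0,E^1,r,s)$ has range and source maps $r,s : E^1\to E^0$; it has no sources if $r^{-1}(v)\neq\emptyset$ for all $v$, and is locally finite if $r^{-1}(v)$ and $s^{-1}(v)$ are finite for all $v$. A finite path is $\mu = \mu_1\cdots\mu_n$ with $s(\mu_i) = r(\mu_{i+1})$, $|\mu|=n$; $E^*$ is the set of finite paths. $E^\infty$ is the space of infinite paths $\xi = \xi_1\xi_2\cdots$ with the product topology, with compact open cylinder sets $Z(\mu) = \{\xi : \xi_i = \mu_i,\ i\le|\mu|\}$; $\sigma$ is the shift $\xi_1\xi_2\cdots\mapsto\xi_2\xi_3\cdots$. The Exel system is $(C_0(E^\infty),\alpha,L)$ with $\alpha(f) = f\circ\sigma$ and $L(f)(\xi) = |s^{-1}(r(\xi))|^{-1}\sum_{s(e)=r(\xi)} f(e\xi)$. $M_L$ is the Hilbert $C_0(E^\infty)$-module completion of $C_0(E^\infty)$ with right action $g\cdot f = g\alpha(f)$, inner product $\langle g,h\rangle_L = L(\bar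 gh)$, canonical map $q$, and left action $\phi(f)q(g) = q(fg)$. For $x,y\in M_L$, $\Theta_{x,y}(z) = x\cdot\langle y,z\rangle_L$. *)

theory Defs
  imports "HOL-Analysis.Analysis"
begin

text \<open>Directed graph E = (E^0, E^1, r, s) with E^0 = UNIV :: 'v set, E^1 = UNIV :: 'e set.
  Infinite paths are functions nat => 'e with s (xi i) = r (xi (i+1)) (the paper's xi_{i+1}
  is our xi i, 0-based).\<close>

definition locally_finite_graph :: "('e \<Rightarrow> 'v) \<Rightarrow> ('e \<Rightarrow> 'v) \<Rightarrow> bool" where
  "locally_finite_graph r s \<longleftrightarrow> (\<forall>v. finite {e. r e = v} \<and> finite {e. s e = v})"

definition no_sources :: "('e \<Rightarrow> 'v) \<Rightarrow> bool" where
  "no_sources r \<longleftrightarrow> (\<forall>v. {e. r e = v} \<noteq> {})"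

definition finite_path :: "('e \<Rightarrow> 'v) \<Rightarrow> ('e \<Rightarrow> 'v) \<Rightarrow> 'e list \<Rightarrow> bool" where
  "finite_path r s \<mu> \<longleftrightarrow> (\<forall>i. Suc i < length \<mu> \<longrightarrow> s (\<mu> ! i) = r (\<mu> ! Suc i))"

definition inf_paths :: "('e \<Rightarrow> 'v) \<Rightarrow> ('e \<Rightarrow> 'v) \<Rightarrow> (nat \<Rightarrow> 'e) set" where
  "inf_paths r s = {\<xi>. \<forall>i. s (\<xi> i) = r (\<xi> (Suc i))}"

definition path_topology :: "('e \<Rightarrow> 'v) \<Rightarrow> ('e \<Rightarrow> 'v) \<Rightarrow> (nat \<Rightarrow> 'e) topology" where
  "path_topology r s = subtopology (product_topology (\<lambda>_. discrete_topology (UNIV :: 'e set)) UNIV)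
                                    (inf_paths r s)"

definition C0 :: "('e \<Rightarrow> 'v) \<Rightarrow> ('e \<Rightarrow> 'v) \<Rightarrow> ((nat \<Rightarrow> 'e) \<Rightarrow> complex) set" where
  "C0 r s = {g. continuous_map (path_topology r s) euclidean g \<and>
      (\<forall>\<epsilon>>0. \<exists>K. compactin (path_topology r s) K \<and>
                 (\<forall>\<xi>\<in>inf_paths r s - K. norm (g \<xi>) < \<epsilon>))}"

definition cyl :: "('e \<Rightarrow> 'v) \<Rightarrow> ('e \<Rightarrow> 'v) \<Rightarrow> 'e list \<Rightarrow> (nat \<Rightarrow> 'e) set" where
  "cyl r s \<mu> = {\<xi> \<in> inf_paths r s. \<forall>i<length \<mu>. \<xi> i = \<mu> ! i}"

definition shift :: "(nat \<Rightarrow> 'e) \<Rightarrow> (nat \<Rightarrow> 'e)" where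
  "shift \<xi> = (\<lambda>n. \<xi> (Suc n))"

definition prepend :: "'e \<Rightarrow> (nat \<Rightarrow> 'e) \<Rightarrow> (nat \<Rightarrow> 'e)" where
  "prepend e \<xi> = (\<lambda>n. case n of 0 \<Rightarrow> e | Suc m \<Rightarrow> \<xi> m)"

definition cnt :: "('e \<Rightarrow> 'v) \<Rightarrow> 'v \<Rightarrow> nat" where
  "cnt s v = card {e. s e = v}"

definition alpha :: "((nat \<Rightarrow> 'e) \<Rightarrow> complex) \<Rightarrow> ((nat \<Rightarrow> 'e) \<Rightarrow> complex)" where
  "alpha f = f \<circ> shift"

text \<open>Transfer operator L; r(\<xi>) = r(\<xi>_1).\<close>
definition transferL :: "('e \<Rightarrow> 'v) \<Rightarrow> ('e \<Rightarrow> 'v) \<Rightarrow> ((nat \<Rightarrow> 'e) \<Rightarrow> complex) \<Rightarrow> ((nat \<Rightarrow> 'e) \<Rightarrow> complex)" where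
  "transferL r s f = (\<lambda>\<xi>. (1 / of_nat (cnt s (r (\<xi> 0)))) *
        (\<Sum>e\<in>{e. s e = r (\<xi> 0)}. f (prepend e \<xi>)))"

text \<open>Operations on the dense subspace q(C_0(E^\<infinity>)) of M_L (q identified with the identity).\<close>
definition right_act :: "((nat \<Rightarrow> 'e) \<Rightarrow> complex) \<Rightarrow> ((nat \<Rightarrow> 'e) \<Rightarrow> complex) \<Rightarrow> ((nat \<Rightarrow> 'e) \<Rightarrow> complex)" where
  "right_act g f = (\<lambda>\<xi>. g \<xi> * alpha f \<xi>)"

definition innerL :: "('e \<Rightarrow> 'v) \<Rightarrow> ('e \<Rightarrow> 'v) \<Rightarrow> ((nat \<Rightarrow> 'e) \<Rightarrow> complex) \<Rightarrow> ((nat \<Rightarrow> 'e) \<Rightarrow> complex) \<Rightarrow> ((nat \<Rightarrow> 'e) \<Rightarrow> complex)" where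
  "innerL r s g h = transferL r s (\<lambda>\<xi>. cnj (g \<xi>) * h \<xi>)"

definition left_act :: "((nat \<Rightarrow> 'e) \<Rightarrow> complex) \<Rightarrow> ((nat \<Rightarrow> 'e) \<Rightarrow> complex) \<Rightarrow> ((nat \<Rightarrow> 'e) \<Rightarrow> complex)" where
  "left_act f g = (\<lambda>\<xi>. f \<xi> * g \<xi>)"

definition Theta :: "('e \<Rightarrow> 'v) \<Rightarrow> ('e \<Rightarrow> 'v) \<Rightarrow> ((nat \<Rightarrow> 'e) \<Rightarrow> complex) \<Rightarrow> ((nat \<Rightarrow> 'e) \<Rightarrow> complex) \<Rightarrow> ((nat \<Rightarrow> 'e) \<Rightarrow> complex) \<Rightarrow> ((nat \<Rightarrow> 'e) \<Rightarrow> complex)" where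
  "Theta r s x y z = right_act x (innerL r s y z)"

end

theory Submission
  imports Defs
begin

text \<open>Evaluated at the shifted path, the transfer operator averages over the edges that can
  precede the shift, and among these only the first edge of \<xi> itself reconstructs \<xi>. Hence
  for sets X, Y of paths all starting with the same edge a, the rank-one operator
  Theta(chi_X, chi_Y) is multiplication by chi_(X \<inter> Y) / c(s(a)). Taking X, Y to be
  Z(\<mu>) and Z(\<mu>_1), whose intersection is Z(\<mu>), gives the theorem.\<close>

lemma prepend_shift: "prepend (\<xi> 0) (shift \<xi>) = \<xi>"
  by (rule ext) (auto simp: prepend_def shift_def split: nat.splits)

lemma prepend_0 [simp]: "prepend e \<eta> 0 = e"
  by (simp add: prepend_def)

lemma cnt_source_nonzero:
  assumes "locally_finite_graph r s"
  shows "cnt s (s e) \<noteq> 0"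
proof -
  have "finite {e'. s e' = s e}"
    using assms by (simp add: locally_finite_graph_def)
  moreover have "e \<in> {e'. s e' = s e}" by simp
  ultimately show ?thesis by (auto simp: cnt_def)
qed

lemma cnj_indicator [simp]: "cnj (indicator A x) = indicator A x"
  by (simp add: indicator_def)

lemma transferL_shift:
  assumes "\<xi> \<in> inf_paths r s"
  shows "transferL r s h (shift \<xi>)
    = (\<Sum>e\<in>{e. s e = s (\<xi> 0)}. h (prepend e (shift \<xi>))) / of_nat (cnt s (s (\<xi> 0)))"
  using assms by (simp add: transferL_def inf_paths_def shift_def)

lemma sum_prepend_indicator:
  assumes "finite {e. s e = s (\<xi> 0)}" and "Y \<subseteq> {\<eta>. \<eta> 0 = \<xi> 0}"
  shows "(\<Sum>e\<in>{e. s e = s (\<xi> 0)}. indicator Y (prepend e (shift \<xi>)) * f (prepend e (shift \<xi>)))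
    = indicator Y \<xi> * (f \<xi> :: complex)"
proof -
  have "indicator Y (prepend e (shift \<xi>)) * f (prepend e (shift \<xi>))
      = (if e = \<xi> 0 then indicator Y \<xi> * f \<xi> else 0)" for e
    using assms(2) by (auto simp: prepend_shift indicator_def)
  then show ?thesis
    using assms(1) by simp
qed

lemma Theta_indicators_same_first_edge:
  assumes "locally_finite_graph r s" and "\<xi> \<in> inf_paths r s"
    and "X \<subseteq> {\<eta>. \<eta> 0 = a}" and "Y \<subseteq> {\<eta>. \<eta> 0 = a}"
  shows "Theta r s (indicator X) (indicator Y) g \<xi>
    = indicator (X \<inter> Y) \<xi> * g \<xi> / of_nat (cnt s (s a))"
proof (cases "\<xi> 0 = a")
  case True
  have "finite {e. s e = s (\<xi> 0)}"
    using assms(1) by (simp add: locally_finite_graph_def)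
  then have "(\<Sum>e\<in>{e. s e = s (\<xi> 0)}. indicator Y (prepend e (shift \<xi>)) * g (prepend e (shift \<xi>)))
      = indicator Y \<xi> * g \<xi>"
    using assms(4) True by (intro sum_prepend_indicator) auto
  then have "innerL r s (indicator Y) g (shift \<xi>) = indicator Y \<xi> * g \<xi> / of_nat (cnt s (s a))"
    using assms(2) True by (simp only: innerL_def transferL_shift cnj_indicator)
  then show ?thesis
    by (simp add: Theta_def right_act_def alpha_def indicator_inter_arith)
next
  case False
  with assms(3) have "\<xi> \<notin> X" by auto
  then show ?thesis by (simp add: Theta_def right_act_def)
qed

theorem lemma5p2:
  fixes r s :: "'e \<Rightarrow> 'v" and \<mu> :: "'e list"
  assumes "locally_finite_graph r s" and "no_sources r"
    and "finite_path r s \<mu>" and "length \<mu> \<ge> 1"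
  shows "\<forall>g\<in>C0 r s. \<forall>\<xi>\<in>inf_paths r s.
     left_act (indicator (cyl r s \<mu>)) g \<xi>
       = of_nat (cnt s (s (hd \<mu>))) *
         Theta r s (indicator (cyl r s \<mu>)) (indicator (cyl r s [hd \<mu>])) g \<xi>
   \<and> left_act (indicator (cyl r s \<mu>)) g \<xi>
       = of_nat (cnt s (s (hd \<mu>))) *
         Theta r s (indicator (cyl r s [hd \<mu>])) (indicator (cyl r s \<mu>)) g \<xi>"
proof (intro ballI)
  fix g and \<xi> :: "nat \<Rightarrow> 'e"
  assume \<xi>: "\<xi> \<in> inf_paths r s"
  have hd: "\<mu> ! 0 = hd \<mu>"
    using assms(4) by (cases \<mu>) auto
  have sub: "cyl r s \<mu> \<subseteq> cyl r s [hd \<mu>]"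
    using assms(4) hd by (auto simp: cyl_def dest: spec[of _ 0])
  have start: "cyl r s [hd \<mu>] \<subseteq> {\<eta>. \<eta> 0 = hd \<mu>}"
    by (auto simp: cyl_def)
  have c: "cnt s (s (hd \<mu>)) \<noteq> 0"
    using assms(1) by (rule cnt_source_nonzero)
  have Theta_Z: "Theta r s (indicator X) (indicator Y) g \<xi>
      = indicator (cyl r s \<mu>) \<xi> * g \<xi> / of_nat (cnt s (s (hd \<mu>)))"
    if "{X, Y} = {cyl r s \<mu>, cyl r s [hd \<mu>]}" for X Y
    using Theta_indicators_same_first_edge[OF assms(1) \<xi>, of X "hd \<mu>" Y g] that sub start
    by (auto simp: doubleton_eq_iff Int_absorb1 Int_absorb2)
  show "left_act (indicator (cyl r s \<mu>)) g \<xi>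
       = of_nat (cnt s (s (hd \<mu>))) *
         Theta r s (indicator (cyl r s \<mu>)) (indicator (cyl r s [hd \<mu>])) g \<xi>
   \<and> left_act (indicator (cyl r s \<mu>)) g \<xi>
       = of_nat (cnt s (s (hd \<mu>))) *
         Theta r s (indicator (cyl r s [hd \<mu>])) (indicator (cyl r s \<mu>)) g \<xi>"
    using c by (simp add: left_act_def Theta_Z insert_commute)
qed

end
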